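(* Let $d\ge2$, $A\in\mathcal C^{d-1}$ and $\tau\in(0,1]$. Then for every $C\in\mathcal C^d_A$, $$\tfrac{\tau}{2}\le\int_{\mathbb I^{d-1}}Q^\tau_C(\mathbf x)\,\mathrm d\mu_A(\mathbf x)\le\tfrac{\tau+1}{2},$$ and both bounds are best possible, i.e. $\inf_{C\in\mathcal C^d_A}\int Q^\tau_C\,\mathrm d\mu_A=\frac\tau2$ and $\sup_{C\in\mathcal C^d_A}\int Q^\tau_C\,\mathrm d\mu_A=\frac{\tau+1}2$.
   Context: $\mathbb I=[0,1]$, $\lambda$ Lebesgue measure. A $d$-copula $C\in\mathcal C^d$ is the distribution function on $\mathbb I^d$ of a probability measure $\mu_C$ with uniform univariate marginals; points are $(\mathbf x,y)$, $\mathbf x\in\mathbb I^{d-1}$. $C_{1:(d-1)}$ is the marginal copula of the first $d-1$ coordinates; $\mathcal C^d_A=\{C\in\mathcal C^d:C_{1:(d-1)}=A\}$ (for $d=2$, $\mu_A=\lambda$, $\mathcal C^2_A=\mathcal C^2$). $K_C$ is the Markov kernel of $C$ w.r.t. the first $d-1$ coordinates: $\mu_C(B\times F)=\int_B K_C(\mathbf x,F)\,\mathrm d\mu_{A}(\mathbf x)$ for $C\in\mathcal C^d_A$. The $\tau$-quantile regression function is $Q^\tau_C(\mathbf x)=\inf\{y\in\mathbb I: K_C(\mathbf x,[0,y])\ge\tau\}$. *)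

theory Defs
  imports "HOL-Probability.Probability"
begin

text \<open>Points of the unit cube of dimension d are functions nat => real, coordinates 0..d-1
  (extensional outside {..<d}), as in the product measure PiM.\<close>

definition cube_space :: "nat \<Rightarrow> (nat \<Rightarrow> real) measure" where
  "cube_space d = PiM {..<d} (\<lambda>_. borel)"

text \<open>A d-copula, identified with its probability measure mu_C: a probability measure on
  R^d with uniform univariate marginals on [0,1].\<close>
definition is_copula :: "nat \<Rightarrow> (nat \<Rightarrow> real) measure \<Rightarrow> bool" where
  "is_copula d M \<longleftrightarrow> prob_space M \<and> sets M = sets (cube_space d) \<and>
     (\<forall>i<d. distr M borel (\<lambda>z. z i) = uniform_measure lborel {0..1})"

definition marg_first :: "nat \<Rightarrow> (nat \<Rightarrow> real) measure \<Rightarrow> (nat \<Rightarrow> real) measure" where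
  "marg_first d C = distr C (cube_space (d - 1)) (\<lambda>z. restrict z {..<d - 1})"

definition copulas_with_marginal :: "nat \<Rightarrow> (nat \<Rightarrow> real) measure \<Rightarrow> (nat \<Rightarrow> real) measure set" where
  "copulas_with_marginal d A = {C. is_copula d C \<and> marg_first d C = A}"

definition is_markov_kernel_of ::
  "nat \<Rightarrow> (nat \<Rightarrow> real) measure \<Rightarrow> (nat \<Rightarrow> real) measure \<Rightarrow> ((nat \<Rightarrow> real) \<Rightarrow> real measure) \<Rightarrow> bool" where
  "is_markov_kernel_of d A C K \<longleftrightarrow>
     (\<forall>x\<in>space A. prob_space (K x) \<and> sets (K x) = sets borel) \<and>
     (\<forall>F\<in>sets borel. (\<lambda>x. measure (K x) F) \<in> borel_measurable A) \<and>
     (\<forall>B\<in>sets A. \<forall>F\<in>sets borel.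
        measure C {z \<in> space C. restrict z {..<d - 1} \<in> B \<and> z (d - 1) \<in> F}
          = set_lebesgue_integral A B (\<lambda>x. measure (K x) F))"

definition quantile_reg :: "((nat \<Rightarrow> real) \<Rightarrow> real measure) \<Rightarrow> real \<Rightarrow> (nat \<Rightarrow> real) \<Rightarrow> real" where
  "quantile_reg K \<tau> x = Inf {y \<in> {0..1}. measure (K x) {0..y} \<ge> \<tau>}"

end

theory Submission
  imports Defs
begin

(*
  For a law \<nu> of a random variable Y on [0,1] with \<tau>-quantile q, Markov-type inequalities
  give \<tau> - E (\<tau> - Y)\<^sup>+ / \<tau> \<le> q \<le> \<tau> + E (Y - \<tau>)\<^sup>+ / (1 - \<tau>).  Apply this to
  \<nu> = K(x, .) and integrate against \<mu>_A: the mixture of the kernels is the last marginal of C,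
  i.e. the uniform law, for which the two expectations are \<tau>\<^sup>2/2 and (1 - \<tau>)\<^sup>2/2.  This gives
  the bounds \<tau>/2 and (\<tau> + 1)/2.
  Conversely, let the last coordinate be a x\<^sub>1 with probability a and a + (1 - a) x\<^sub>1 with
  probability 1 - a, independently of x.  Since the uniform law on [0,1] is the a : (1 - a)
  mixture of the uniform laws on [0,a] and [a,1], this is a copula in C\<^sup>d_A, and its quantile
  regression integrates to a/2 if \<tau> \<le> a and to (1 + a)/2 otherwise.  Hence a = \<tau> attains the
  infimum, and a tending to \<tau> from below approaches the supremum.
*)

section \<open>Integrals against the uniform law on [0,1]\<close>

abbreviation uniform01 :: "real measure" where
  "uniform01 \<equiv> uniform_measure lborel {0..1}"

lemma prob_space_uniform01: "prob_space uniform01"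
  by (rule prob_space_uniform_measure) auto

lemma integral_uniform01_continuous:
  fixes f :: "real \<Rightarrow> real"
  assumes "continuous_on UNIV f"
  shows "(\<integral>x. f x \<partial>uniform01) = integral {0..1} f"
proof -
  have "uniform01 = density lborel (\<lambda>x. ennreal (indicator {0..1} x))"
    unfolding uniform_measure_def
    by (rule arg_cong[where f="density lborel"]) (auto simp: fun_eq_iff split: split_indicator)
  then have "(\<integral>x. f x \<partial>uniform01) = (LINT x:{0..1}|lborel. f x)"
    using assms
    by (simp add: integral_density borel_measurable_continuous_onI set_lebesgue_integral_def)
  also have "\<dots> = integral {0..1} f"
    using borel_integrable_compact[OF _ continuous_on_subset[OF assms], of "{0..1}"]
    by (intro set_borel_integral_eq_integral(2)) (simp add: set_integrable_def)
  finally show ?thesis .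
qed

lemma has_integral_affine:
  fixes a b \<alpha> \<beta> :: real
  assumes "a \<le> b"
  shows "((\<lambda>y. \<alpha> + \<beta> * y) has_integral \<alpha> * (b - a) + \<beta> * (b\<^sup>2 - a\<^sup>2) / 2) {a..b}"
proof -
  have "((\<lambda>y. \<alpha> * y + \<beta> * y\<^sup>2 / 2) has_vector_derivative \<alpha> + \<beta> * y) (at y within {a..b})" for y
    unfolding has_real_derivative_iff_has_vector_derivative[symmetric]
    by (auto intro!: derivative_eq_intros simp: algebra_simps)
  from fundamental_theorem_of_calculus[OF assms this] show ?thesis
    by (simp add: algebra_simps diff_divide_distrib)
qed

lemma integral_uniform01_affine: "(\<integral>u. \<alpha> + \<beta> * u \<partial>uniform01) = \<alpha> + \<beta> / 2"
  using has_integral_affine[of 0 1 \<alpha> \<beta>]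
  by (subst integral_uniform01_continuous) (auto intro!: continuous_intros simp: integral_unique)

lemma integral_uniform01_pos_part_below:
  assumes "0 \<le> t" "t \<le> 1"
  shows "(\<integral>y. max 0 (t - max y 0) \<partial>uniform01) = t\<^sup>2 / 2"
proof -
  have "((\<lambda>y. t + (-1) * y) has_integral t\<^sup>2 / 2) {0..t}"
    by (rule has_integral_eq_rhs[OF has_integral_affine]) (use assms in \<open>simp_all add: power2_eq_square field_simps\<close>)
  then have below: "((\<lambda>y. max 0 (t - max y 0)) has_integral t\<^sup>2 / 2) {0..t}"
    by (rule has_integral_eq[rotated]) auto
  have above: "((\<lambda>y. max 0 (t - max y 0)) has_integral 0) {t..1}"
    by (rule has_integral_eq[rotated, OF has_integral_0]) auto
  from has_integral_combine[OF assms below above] show ?thesis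
    by (subst integral_uniform01_continuous) (auto intro!: continuous_intros simp: integral_unique)
qed

lemma integral_uniform01_pos_part_above:
  assumes "0 \<le> t" "t \<le> 1"
  shows "(\<integral>y. max 0 (min y 1 - t) \<partial>uniform01) = (1 - t)\<^sup>2 / 2"
proof -
  have below: "((\<lambda>y. max 0 (min y 1 - t)) has_integral 0) {0..t}"
    by (rule has_integral_eq[rotated, OF has_integral_0]) auto
  have "((\<lambda>y. (-t) + 1 * y) has_integral (1 - t)\<^sup>2 / 2) {t..1}"
    by (rule has_integral_eq_rhs[OF has_integral_affine]) (use assms in \<open>simp_all add: power2_eq_square field_simps\<close>)
  then have above: "((\<lambda>y. max 0 (min y 1 - t)) has_integral (1 - t)\<^sup>2 / 2) {t..1}"
    by (rule has_integral_eq[rotated]) auto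
  from has_integral_combine[OF assms below above] show ?thesis
    by (subst integral_uniform01_continuous) (auto intro!: continuous_intros simp: integral_unique)
qed

section \<open>Quantiles of a distribution on the real line\<close>

definition unit_quantile :: "real measure \<Rightarrow> real \<Rightarrow> real" where
  "unit_quantile \<nu> \<tau> = Inf {y \<in> {0..1}. \<tau> \<le> measure \<nu> {0..y}}"

lemma quantile_reg_eq_unit_quantile: "quantile_reg K \<tau> x = unit_quantile (K x) \<tau>"
  by (simp add: quantile_reg_def unit_quantile_def)

context real_distribution
begin

lemma measure_atLeastAtMost_mono: "y \<le> y' \<Longrightarrow> measure M {0..y} \<le> measure M {0..y'}"
  by (intro finite_measure_mono) auto

lemma tendsto_measure_atLeastAtMost_at_right:
  assumes "0 \<le> q"
  shows "((\<lambda>y. measure M {0..y}) \<longlongrightarrow> measure M {0..q}) (at_right q)"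
proof -
  have cdf_split: "cdf M y - measure M {..<0} = measure M {0..y}" if "0 \<le> y" for y
  proof -
    have "{..y} = {..<0} \<union> {0..y}" using that by auto
    moreover have "measure M ({..<0} \<union> {0..y}) = measure M {..<0} + measure M {0..y}"
      by (rule finite_measure_Union) auto
    ultimately have "cdf M y = measure M {..<0} + measure M {0..y}"
      by (simp add: cdf_def)
    then show ?thesis by simp
  qed
  have "((\<lambda>y. cdf M y - measure M {..<0}) \<longlongrightarrow> cdf M q - measure M {..<0}) (at_right q)"
    using cdf_is_right_cont[of q] unfolding continuous_within by (intro tendsto_intros)
  moreover have "eventually (\<lambda>y. cdf M y - measure M {..<0} = measure M {0..y}) (at_right q)"
    using eventually_at_right_less[of q] by eventually_elim (use assms cdf_split in auto)
  ultimately show ?thesis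
    using cdf_split[OF assms] by (simp add: tendsto_cong)
qed

lemma unit_quantile_attained:
  assumes "\<tau> \<le> measure M {0..1}"
  shows "unit_quantile M \<tau> \<in> {0..1}" and "\<tau> \<le> measure M {0..unit_quantile M \<tau>}"
proof -
  define S where "S = {y \<in> {0..1}. \<tau> \<le> measure M {0..y}}"
  define q where "q = Inf S"
  have "1 \<in> S" using assms by (simp add: S_def)
  have bdd: "bdd_below S" by (rule bdd_belowI[of _ 0]) (auto simp: S_def)
  have "0 \<le> q" unfolding q_def using \<open>1 \<in> S\<close> by (intro cInf_greatest) (auto simp: S_def)
  have "q \<le> 1" unfolding q_def using \<open>1 \<in> S\<close> bdd by (rule cInf_lower)
  have "q \<in> S"
  proof (cases "q = 1")
    case True
    then show ?thesis using \<open>1 \<in> S\<close> by simp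
  next
    case False
    with \<open>q \<le> 1\<close> have "q < 1" by simp
    have "eventually (\<lambda>y. \<tau> \<le> measure M {0..y}) (at_right q)"
      using eventually_at_right_real[OF \<open>q < 1\<close>]
    proof eventually_elim
      case (elim y)
      then obtain s where "s \<in> S" "s < y"
        using cInf_less_iff[OF _ bdd, of y] \<open>1 \<in> S\<close> by (auto simp: q_def)
      then show ?case using measure_atLeastAtMost_mono[of s y] by (auto simp: S_def)
    qed
    then have "\<tau> \<le> measure M {0..q}"
      by (rule tendsto_lowerbound[OF tendsto_measure_atLeastAtMost_at_right[OF \<open>0 \<le> q\<close>]]) simp
    then show ?thesis using \<open>0 \<le> q\<close> \<open>q \<le> 1\<close> by (simp add: S_def)
  qed
  then show "unit_quantile M \<tau> \<in> {0..1}" and "\<tau> \<le> measure M {0..unit_quantile M \<tau>}"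
    by (simp_all add: S_def q_def unit_quantile_def)
qed

lemma unit_quantile_le_iff:
  assumes "\<tau> \<le> measure M {0..1}"
  shows "unit_quantile M \<tau> \<le> c \<longleftrightarrow> 1 \<le> c \<or> (0 \<le> c \<and> \<tau> \<le> measure M {0..c})"
proof
  assume "unit_quantile M \<tau> \<le> c"
  then show "1 \<le> c \<or> (0 \<le> c \<and> \<tau> \<le> measure M {0..c})"
    using unit_quantile_attained[OF assms] measure_atLeastAtMost_mono[of "unit_quantile M \<tau>" c]
    by auto
next
  assume c: "1 \<le> c \<or> (0 \<le> c \<and> \<tau> \<le> measure M {0..c})"
  have "unit_quantile M \<tau> \<le> min c 1"
    unfolding unit_quantile_def
  proof (rule cInf_lower)
    show "min c 1 \<in> {y \<in> {0..1}. \<tau> \<le> measure M {0..y}}"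
      using c assms by (auto simp: min_def)
    show "bdd_below {y \<in> {0..1}. \<tau> \<le> measure M {0..y}}"
      by (rule bdd_belowI[of _ 0]) auto
  qed
  then show "unit_quantile M \<tau> \<le> c" by simp
qed

lemma unit_quantile_eq_Inf_empty:
  assumes "measure M {0..1} < \<tau>"
  shows "unit_quantile M \<tau> = Inf {}"
proof -
  have "\<not> \<tau> \<le> measure M {0..y}" if "y \<le> 1" for y
    using assms measure_atLeastAtMost_mono[OF that] by linarith
  then have "{y \<in> {0..1}. \<tau> \<le> measure M {0..y}} = {}" by auto
  then show ?thesis unfolding unit_quantile_def by (rule arg_cong)
qed

lemma unit_quantile_ge:
  assumes "0 < \<tau>" "\<tau> \<le> measure M {0..1}"
  shows "\<tau> - (\<integral>y. max 0 (\<tau> - max y 0) \<partial>M) / \<tau> \<le> unit_quantile M \<tau>"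
proof (cases "\<tau> \<le> unit_quantile M \<tau>")
  case True
  have "0 \<le> (\<integral>y. max 0 (\<tau> - max y 0) \<partial>M) / \<tau>"
    using assms(1) by simp
  with True show ?thesis by linarith
next
  case False
  define q where "q = unit_quantile M \<tau>"
  have q: "0 \<le> q" "q < \<tau>" "\<tau> \<le> measure M {0..q}"
    using unit_quantile_attained[OF assms(2)] False by (auto simp: q_def)
  have "(\<tau> - q) * \<tau> \<le> (\<tau> - q) * measure M {0..q}"
    using q by simp
  also have "\<dots> = (\<integral>y. (\<tau> - q) * indicator {0..q} y \<partial>M)"
    by simp
  also have "\<dots> \<le> (\<integral>y. max 0 (\<tau> - max y 0) \<partial>M)"
    using assms(1) q
    by (intro integral_mono integrable_const_bound[where B=\<tau>]) (auto split: split_indicator)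
  finally have "\<tau> - q \<le> (\<integral>y. max 0 (\<tau> - max y 0) \<partial>M) / \<tau>"
    using assms(1) by (simp add: le_divide_eq)
  then show ?thesis by (simp add: q_def)
qed

text \<open>For \<open>\<tau> = 1\<close> the bound reads \<open>unit_quantile M 1 \<le> 1\<close>, since \<open>x / 0 = 0\<close>.\<close>

lemma unit_quantile_le:
  assumes "0 < \<tau>" "\<tau> \<le> 1" "measure M {0..1} = 1"
  shows "unit_quantile M \<tau> \<le> \<tau> + (\<integral>y. max 0 (min y 1 - \<tau>) \<partial>M) / (1 - \<tau>)"
proof (cases "unit_quantile M \<tau> \<le> \<tau>")
  case True
  have "0 \<le> (\<integral>y. max 0 (min y 1 - \<tau>) \<partial>M) / (1 - \<tau>)"
    using assms(2) by simp
  with True show ?thesis by linarith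
next
  case False
  have "\<tau> \<le> measure M {0..1}" using assms by simp
  note quantile_le = unit_quantile_le_iff[OF this]
  show ?thesis
  proof (rule dense_le_bounded)
    show "\<tau> < unit_quantile M \<tau>" using False by simp
  next
    fix w assume w: "\<tau> < w" "w < unit_quantile M \<tau>"
    then have "w < 1" "measure M {0..w} < \<tau>"
      using quantile_le[of w] assms(1) by auto
    have "measure M {0..1} = measure M {0..w} + measure M {w<..1}"
    proof -
      have "{0..1} = {0..w} \<union> {w<..1}" using w assms(1) \<open>w < 1\<close> by auto
      moreover have "measure M ({0..w} \<union> {w<..1}) = measure M {0..w} + measure M {w<..1}"
        by (rule finite_measure_Union) auto
      ultimately show ?thesis by simp
    qed
    then have "(w - \<tau>) * (1 - \<tau>) \<le> (w - \<tau>) * measure M {w<..1}"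
      using w \<open>measure M {0..w} < \<tau>\<close> assms(3) by (intro mult_left_mono) auto
    also have "\<dots> = (\<integral>y. (w - \<tau>) * indicator {w<..1} y \<partial>M)"
      by simp
    also have "\<dots> \<le> (\<integral>y. max 0 (min y 1 - \<tau>) \<partial>M)"
      using w \<open>w < 1\<close> assms(1)
      by (intro integral_mono integrable_const_bound[where B=1]) (auto split: split_indicator)
    finally have "w - \<tau> \<le> (\<integral>y. max 0 (min y 1 - \<tau>) \<partial>M) / (1 - \<tau>)"
      using w \<open>w < 1\<close> by (simp add: le_divide_eq)
    then show "w \<le> \<tau> + (\<integral>y. max 0 (min y 1 - \<tau>) \<partial>M) / (1 - \<tau>)" by simp
  qed
qed

end

section \<open>Markov kernels\<close>

lemma measurable_markov_kernel:
  assumes "is_markov_kernel_of d A C K"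
  shows "K \<in> A \<rightarrow>\<^sub>M prob_algebra borel"
proof (rule measurable_prob_algebraI)
  have K: "prob_space (K x)" "sets (K x) = sets borel" if "x \<in> space A" for x
    using assms that by (auto simp: is_markov_kernel_of_def)
  then show "prob_space (K x)" if "x \<in> space A" for x
    using that by blast
  show "K \<in> A \<rightarrow>\<^sub>M subprob_algebra borel"
  proof (rule measurable_subprob_algebra)
    fix F :: "real set" assume "F \<in> sets borel"
    then have "(\<lambda>x. measure (K x) F) \<in> borel_measurable A"
      using assms by (auto simp: is_markov_kernel_of_def)
    then have "(\<lambda>x. ennreal (measure (K x) F)) \<in> borel_measurable A"
      by measurable
    then show "(\<lambda>x. emeasure (K x) F) \<in> borel_measurable A"
      by (rule measurable_cong[THEN iffD1, rotated])
        (simp add: K finite_measure.emeasure_eq_measure[OF prob_space.finite_measure])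
  qed (use K prob_space_imp_subprob_space in auto)
qed

lemma prob_space_kernel: "K \<in> A \<rightarrow>\<^sub>M prob_algebra N \<Longrightarrow> x \<in> space A \<Longrightarrow> prob_space (K x)"
  using measurable_space[of K A "prob_algebra N" x] by (simp add: space_prob_algebra)

lemma sets_kernel: "K \<in> A \<rightarrow>\<^sub>M prob_algebra N \<Longrightarrow> x \<in> space A \<Longrightarrow> sets (K x) = sets N"
  using measurable_space[of K A "prob_algebra N" x] by (simp add: space_prob_algebra)

lemma real_distribution_kernel:
  "K \<in> A \<rightarrow>\<^sub>M prob_algebra borel \<Longrightarrow> x \<in> space A \<Longrightarrow> real_distribution (K x)"
  by (simp add: real_distribution_def real_distribution_axioms_def prob_space_kernel sets_kernel)

lemma prob_space_bind_kernel:
  "prob_space A \<Longrightarrow> K \<in> A \<rightarrow>\<^sub>M prob_algebra N \<Longrightarrow> prob_space (bind A K)"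
  by (rule prob_space_bind'[of A A]) (simp_all add: space_prob_algebra)

lemma sets_bind_kernel:
  "prob_space A \<Longrightarrow> K \<in> A \<rightarrow>\<^sub>M prob_algebra N \<Longrightarrow> sets (bind A K) = sets N"
  by (rule sets_bind'[of A A]) (simp_all add: space_prob_algebra)

lemma integral_bind_kernel:
  fixes f :: "'b \<Rightarrow> real"
  assumes K: "K \<in> A \<rightarrow>\<^sub>M prob_algebra N" and A: "prob_space A"
    and f: "f \<in> borel_measurable N" and bound: "\<And>y. \<bar>f y\<bar> \<le> B"
  shows "integrable A (\<lambda>x. \<integral>y. f y \<partial>K x)"
    and "(\<integral>y. f y \<partial>bind A K) = (\<integral>x. (\<integral>y. f y \<partial>K x) \<partial>A)"
proof -
  interpret A: prob_space A by (rule A)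
  have K_sub: "K \<in> A \<rightarrow>\<^sub>M subprob_algebra N"
    by (rule measurable_prob_algebraD[OF K])
  show "integrable A (\<lambda>x. \<integral>y. f y \<partial>K x)"
  proof (rule A.integrable_const_bound[where B=B])
    show "(\<lambda>x. \<integral>y. f y \<partial>K x) \<in> borel_measurable A"
      by (rule measurable_compose[OF K_sub integral_measurable_subprob_algebra[OF f]])
    show "AE x in A. norm (\<integral>y. f y \<partial>K x) \<le> B"
    proof (rule AE_I2)
      fix x assume x: "x \<in> space A"
      interpret Kx: prob_space "K x" by (rule prob_space_kernel[OF K x])
      have "f \<in> borel_measurable (K x)"
        using f by (simp add: measurable_cong_sets[OF sets_kernel[OF K x] refl])
      then have "integrable (K x) f"
        using bound by (intro Kx.integrable_const_bound[where B=B]) auto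
      have "norm (\<integral>y. f y \<partial>K x) \<le> (\<integral>y. norm (f y) \<partial>K x)"
        by (rule integral_norm_bound)
      also have "\<dots> \<le> (\<integral>y. B \<partial>K x)"
        using \<open>integrable (K x) f\<close> bound by (intro integral_mono) auto
      finally show "norm (\<integral>y. f y \<partial>K x) \<le> B" by (simp add: Kx.prob_space)
    qed
  qed
  show "(\<integral>y. f y \<partial>bind A K) = (\<integral>x. (\<integral>y. f y \<partial>K x) \<partial>A)"
    using bound prob_space_kernel[OF K]
    by (intro integral_bind[OF f _ K_sub A.finite_measure_axioms, where B'=1])
      (auto intro!: AE_I2 simp: prob_space.emeasure_space_1)
qed

lemma measure_bind_kernel:
  assumes K: "K \<in> A \<rightarrow>\<^sub>M prob_algebra N" and A: "prob_space A" and F: "F \<in> sets N"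
  shows "measure (bind A K) F = (\<integral>x. measure (K x) F \<partial>A)"
proof -
  interpret AK: prob_space "bind A K"
    by (rule prob_space_bind_kernel[OF A K])
  have "measure (bind A K) F = (\<integral>y. indicator F y \<partial>bind A K)"
    using F sets_bind_kernel[OF A K] by simp
  also have "\<dots> = (\<integral>x. (\<integral>y. indicator F y \<partial>K x) \<partial>A)"
    using F by (intro integral_bind_kernel(2)[OF K A, where B=1]) auto
  also have "\<dots> = (\<integral>x. measure (K x) F \<partial>A)"
    using F prob_space_kernel[OF K] sets_kernel[OF K] by (intro Bochner_Integration.integral_cong)
      (auto simp: finite_measure.emeasure_eq_measure[OF prob_space.finite_measure])
  finally show ?thesis .
qed

lemma AE_kernel_measure_eq_1:
  assumes K: "K \<in> A \<rightarrow>\<^sub>M prob_algebra N" and A: "prob_space A" and F: "F \<in> sets N"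
    and "measure (bind A K) F = 1"
  shows "AE x in A. measure (K x) F = 1"
proof -
  interpret A: prob_space A by (rule A)
  note K_prob = prob_space_kernel[OF K]
  have int: "integrable A (\<lambda>x. measure (K x) F)"
    using F K_prob
    by (intro A.integrable_const_bound[where B=1] AE_I2 measurable_compose[OF K])
      (auto simp: prob_space.prob_le_1)
  have "(\<integral>x. 1 - measure (K x) F \<partial>A) = 0"
    using measure_bind_kernel[OF K A F] assms(4) int by (simp add: A.prob_space)
  then have "AE x in A. 1 - measure (K x) F = 0"
    using int K_prob
    by (subst integral_nonneg_eq_0_iff_AE[symmetric]) (auto simp: prob_space.prob_le_1)
  then show ?thesis by simp
qed

lemma last_marginal_eq_bind:
  assumes kernel: "is_markov_kernel_of d A C K" and "0 < d"
    and A: "prob_space A" "sets A = sets (cube_space (d - 1))"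
    and C: "prob_space C" "sets C = sets (cube_space d)"
  shows "distr C borel (\<lambda>z. z (d - 1)) = bind A K"
proof -
  interpret C: prob_space C by (rule C(1))
  have K: "K \<in> A \<rightarrow>\<^sub>M prob_algebra borel"
    by (rule measurable_markov_kernel[OF kernel])
  interpret AK: prob_space "bind A K"
    by (rule prob_space_bind_kernel[OF A(1) K])
  have last: "(\<lambda>z. z (d - 1)) \<in> C \<rightarrow>\<^sub>M borel"
    unfolding measurable_cong_sets[OF C(2) refl] cube_space_def
    using \<open>0 < d\<close> by (intro measurable_component_singleton) auto
  have space_A: "space A = PiE {..<d - 1} (\<lambda>_. UNIV)"
    using sets_eq_imp_space_eq[OF A(2)] by (simp add: cube_space_def space_PiM)
  show ?thesis
  proof (rule measure_eqI)
    show "sets (distr C borel (\<lambda>z. z (d - 1))) = sets (bind A K)"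
      using sets_bind_kernel[OF A(1) K] by simp
  next
    fix F assume "F \<in> sets (distr C borel (\<lambda>z. z (d - 1)))"
    then have F: "F \<in> sets borel" by simp
    have "measure (distr C borel (\<lambda>z. z (d - 1))) F
        = measure C {z \<in> space C. restrict z {..<d - 1} \<in> space A \<and> z (d - 1) \<in> F}"
      using measure_distr[OF last F] by (simp add: space_A vimage_def Int_def conj_commute)
    also have "\<dots> = (LINT x:space A|A. measure (K x) F)"
      using kernel F by (simp add: is_markov_kernel_of_def)
    also have "\<dots> = (\<integral>x. measure (K x) F \<partial>A)"
      unfolding set_lebesgue_integral_def by (rule Bochner_Integration.integral_cong) auto
    also have "\<dots> = measure (bind A K) F"
      by (rule measure_bind_kernel[OF K A(1) F, symmetric])
    finally show "emeasure (distr C borel (\<lambda>z. z (d - 1))) F = emeasure (bind A K) F"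
      using C.prob_space_distr[OF last] by (simp add: AK.emeasure_eq_measure finite_measure.emeasure_eq_measure[OF prob_space.finite_measure])
  qed
qed

lemma measurable_quantile_reg:
  assumes K: "K \<in> A \<rightarrow>\<^sub>M prob_algebra borel"
  shows "quantile_reg K \<tau> \<in> borel_measurable A"
proof -
  note dist = real_distribution_kernel[OF K]
  have [measurable]: "(\<lambda>x. measure (K x) {0..c}) \<in> borel_measurable A" for c
    by (rule measurable_compose[OF K]) simp
  have "quantile_reg K \<tau> x \<le> c \<longleftrightarrow>
      (\<tau> \<le> measure (K x) {0..1} \<and> (1 \<le> c \<or> (0 \<le> c \<and> \<tau> \<le> measure (K x) {0..c})))
        \<or> (measure (K x) {0..1} < \<tau> \<and> Inf {} \<le> c)" if "x \<in> space A" for x c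
  proof (cases "\<tau> \<le> measure (K x) {0..1}")
    case True
    then show ?thesis
      using real_distribution.unit_quantile_le_iff[OF dist[OF that] True]
      by (simp add: quantile_reg_eq_unit_quantile)
  next
    case False
    then show ?thesis
      using real_distribution.unit_quantile_eq_Inf_empty[OF dist[OF that]]
      by (simp add: quantile_reg_eq_unit_quantile)
  qed
  then have sublevel_eq: "{x \<in> space A. quantile_reg K \<tau> x \<le> c} =
      {x \<in> space A. (\<tau> \<le> measure (K x) {0..1} \<and> (1 \<le> c \<or> (0 \<le> c \<and> \<tau> \<le> measure (K x) {0..c})))
        \<or> (measure (K x) {0..1} < \<tau> \<and> Inf {} \<le> c)}" for c
    by auto
  then show ?thesis
    unfolding borel_measurable_iff_le sublevel_eq by measurable
qed

text \<open>Where \<open>K x\<close> gives \<open>[0,1]\<close> mass below \<open>\<tau>\<close>, the quantile is the junk value \<open>Inf {}\<close>.\<close>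

lemma integrable_quantile_reg:
  assumes K: "K \<in> A \<rightarrow>\<^sub>M prob_algebra borel" and "finite_measure A"
  shows "integrable A (quantile_reg K \<tau>)"
proof (rule finite_measure.integrable_const_bound[OF assms(2) AE_I2 measurable_quantile_reg[OF K]])
  fix x assume "x \<in> space A"
  note dist = real_distribution_kernel[OF K this]
  show "norm (quantile_reg K \<tau> x) \<le> max 1 \<bar>Inf {}\<bar>"
  proof (cases "\<tau> \<le> measure (K x) {0..1}")
    case True
    then show ?thesis
      using real_distribution.unit_quantile_attained(1)[OF dist True]
      by (auto simp: quantile_reg_eq_unit_quantile)
  next
    case False
    then show ?thesis
      using real_distribution.unit_quantile_eq_Inf_empty[OF dist]
      by (simp add: quantile_reg_eq_unit_quantile)
  qed
qed

section \<open>Bounds on the integrated quantile regression\<close>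

locale copula_kernel =
  fixes d :: nat and A C :: "(nat \<Rightarrow> real) measure" and K :: "(nat \<Rightarrow> real) \<Rightarrow> real measure"
  assumes d_pos: "0 < d" and copula_A: "is_copula (d - 1) A"
    and copula_C: "C \<in> copulas_with_marginal d A" and kernel: "is_markov_kernel_of d A C K"
begin

lemma prob_space_A: "prob_space A"
  using copula_A by (simp add: is_copula_def)

sublocale A: prob_space A
  by (rule prob_space_A)

lemma measurable_K: "K \<in> A \<rightarrow>\<^sub>M prob_algebra borel"
  by (rule measurable_markov_kernel[OF kernel])

lemma bind_eq_uniform01: "bind A K = uniform01"
proof -
  have "is_copula d C"
    using copula_C by (simp add: copulas_with_marginal_def)
  then have "prob_space C" "sets C = sets (cube_space d)"
    and "distr C borel (\<lambda>z. z (d - 1)) = uniform01"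
    using d_pos by (auto simp: is_copula_def)
  moreover have "sets A = sets (cube_space (d - 1))"
    using copula_A by (simp add: is_copula_def)
  ultimately show ?thesis
    using last_marginal_eq_bind[OF kernel d_pos prob_space_A] by simp
qed

lemma AE_kernel_unit_interval: "AE x in A. measure (K x) {0..1} = 1"
  using bind_eq_uniform01 by (intro AE_kernel_measure_eq_1[OF measurable_K prob_space_A]) simp_all

lemma integral_kernel_integral:
  fixes f :: "real \<Rightarrow> real"
  assumes "f \<in> borel_measurable borel" "\<And>y. \<bar>f y\<bar> \<le> B"
  shows "integrable A (\<lambda>x. \<integral>y. f y \<partial>K x)"
    and "(\<integral>x. (\<integral>y. f y \<partial>K x) \<partial>A) = (\<integral>y. f y \<partial>uniform01)"
  using integral_bind_kernel[OF measurable_K prob_space_A assms] bind_eq_uniform01 by simp_all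

lemma integral_quantile_reg_ge:
  assumes "0 < \<tau>" "\<tau> \<le> 1"
  shows "\<tau> / 2 \<le> (\<integral>x. quantile_reg K \<tau> x \<partial>A)"
proof -
  define f where "f = (\<lambda>y::real. max 0 (\<tau> - max y 0))"
  have "f \<in> borel_measurable borel" "\<And>y. \<bar>f y\<bar> \<le> 1"
    using assms unfolding f_def by auto
  note f_int = integral_kernel_integral[OF this]
  have "\<tau> / 2 = (\<integral>x. \<tau> - (\<integral>y. f y \<partial>K x) / \<tau> \<partial>A)"
    using f_int integral_uniform01_pos_part_below[of \<tau>] assms
    by (simp add: f_def A.prob_space power2_eq_square)
  also have "\<dots> \<le> (\<integral>x. quantile_reg K \<tau> x \<partial>A)"
  proof (rule integral_mono_AE)
    show "integrable A (\<lambda>x. \<tau> - (\<integral>y. f y \<partial>K x) / \<tau>)"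
      using f_int(1) by simp
    show "integrable A (quantile_reg K \<tau>)"
      by (rule integrable_quantile_reg[OF measurable_K A.finite_measure_axioms])
    show "AE x in A. \<tau> - (\<integral>y. f y \<partial>K x) / \<tau> \<le> quantile_reg K \<tau> x"
      using AE_space AE_kernel_unit_interval
    proof eventually_elim
      case (elim x)
      then show ?case
        using real_distribution.unit_quantile_ge[OF real_distribution_kernel[OF measurable_K] assms(1)] assms(2)
        by (simp add: f_def quantile_reg_eq_unit_quantile)
    qed
  qed
  finally show ?thesis .
qed

lemma integral_quantile_reg_le:
  assumes "0 < \<tau>" "\<tau> \<le> 1"
  shows "(\<integral>x. quantile_reg K \<tau> x \<partial>A) \<le> (\<tau> + 1) / 2"
proof -
  define f where "f = (\<lambda>y::real. max 0 (min y 1 - \<tau>))"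
  have "f \<in> borel_measurable borel" "\<And>y. \<bar>f y\<bar> \<le> 1"
    using assms unfolding f_def by auto
  note f_int = integral_kernel_integral[OF this]
  have "(\<integral>x. quantile_reg K \<tau> x \<partial>A) \<le> (\<integral>x. \<tau> + (\<integral>y. f y \<partial>K x) / (1 - \<tau>) \<partial>A)"
  proof (rule integral_mono_AE)
    show "integrable A (quantile_reg K \<tau>)"
      by (rule integrable_quantile_reg[OF measurable_K A.finite_measure_axioms])
    show "integrable A (\<lambda>x. \<tau> + (\<integral>y. f y \<partial>K x) / (1 - \<tau>))"
      using f_int(1) by simp
    show "AE x in A. quantile_reg K \<tau> x \<le> \<tau> + (\<integral>y. f y \<partial>K x) / (1 - \<tau>)"
      using AE_space AE_kernel_unit_interval
    proof eventually_elim
      case (elim x)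
      then show ?case
        using real_distribution.unit_quantile_le[OF real_distribution_kernel[OF measurable_K] assms]
        by (simp add: f_def quantile_reg_eq_unit_quantile)
    qed
  qed
  also have "\<dots> = (\<tau> + 1) / 2"
    using f_int integral_uniform01_pos_part_above[of \<tau>] assms
    by (cases "\<tau> = 1") (simp_all add: f_def A.prob_space power2_eq_square field_simps)
  finally show ?thesis .
qed

end

section \<open>Copulas attaining the bounds\<close>

locale randomized_extension =
  fixes n :: nat and A :: "(nat \<Rightarrow> real) measure" and P :: "'b measure"
    and Y :: "(nat \<Rightarrow> real) \<Rightarrow> 'b \<Rightarrow> real"
  assumes prob_space_A: "prob_space A" and sets_A: "sets A = sets (cube_space n)"
    and prob_space_P: "prob_space P"
    and measurable_Y: "(\<lambda>\<omega>. Y (fst \<omega>) (snd \<omega>)) \<in> A \<Otimes>\<^sub>M P \<rightarrow>\<^sub>M borel"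
begin

sublocale A: prob_space A
  by (rule prob_space_A)

sublocale P: prob_space P
  by (rule prob_space_P)

definition extend :: "(nat \<Rightarrow> real) \<times> 'b \<Rightarrow> nat \<Rightarrow> real" where
  "extend \<omega> = (\<lambda>i. if i = n then Y (fst \<omega>) (snd \<omega>) else fst \<omega> i)"

definition joint_law :: "(nat \<Rightarrow> real) measure" where
  "joint_law = distr (A \<Otimes>\<^sub>M P) (cube_space (Suc n)) extend"

definition cond_law :: "(nat \<Rightarrow> real) \<Rightarrow> real measure" where
  "cond_law = (\<lambda>x. distr P borel (Y x))"

lemma space_A: "space A = PiE {..<n} (\<lambda>_. UNIV)"
  using sets_eq_imp_space_eq[OF sets_A] by (simp add: cube_space_def space_PiM)

lemma measurable_component_A: "i < n \<Longrightarrow> (\<lambda>x. x i) \<in> borel_measurable A"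
  unfolding measurable_cong_sets[OF sets_A refl] cube_space_def
  by (intro measurable_component_singleton) auto

lemma measurable_Y_section: "x \<in> space A \<Longrightarrow> Y x \<in> borel_measurable P"
  using measurable_Pair2[OF measurable_Y] by simp

lemma measurable_cond_law: "cond_law \<in> A \<rightarrow>\<^sub>M prob_algebra borel"
proof -
  have "(\<lambda>_. P) \<in> A \<rightarrow>\<^sub>M prob_algebra P"
    by (rule measurable_const) (simp add: space_prob_algebra prob_space_P)
  moreover have "(\<lambda>(x, b). Y x b) \<in> A \<Otimes>\<^sub>M P \<rightarrow>\<^sub>M borel"
    using measurable_Y by (simp add: case_prod_beta')
  ultimately show ?thesis
    unfolding cond_law_def by (rule measurable_distr_prob_space2)
qed

lemma measure_cond_law:
  assumes "x \<in> space A" "F \<in> sets borel"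
  shows "measure (cond_law x) F = (\<integral>b. indicator F (Y x b) \<partial>P)"
proof -
  have "measure (cond_law x) F = measure P (Y x -` F \<inter> space P)"
    unfolding cond_law_def by (rule measure_distr[OF measurable_Y_section[OF assms(1)] assms(2)])
  also have "\<dots> = (\<integral>b. indicator (Y x -` F \<inter> space P) b \<partial>P)"
    using measurable_sets[OF measurable_Y_section[OF assms(1)] assms(2)] by simp
  also have "\<dots> = (\<integral>b. indicator F (Y x b) \<partial>P)"
    by (rule Bochner_Integration.integral_cong) (auto split: split_indicator)
  finally show ?thesis .
qed

lemma measurable_extend: "extend \<in> A \<Otimes>\<^sub>M P \<rightarrow>\<^sub>M cube_space (Suc n)"
  unfolding cube_space_def
proof (rule measurable_PiM_single')
  fix i assume "i \<in> {..<Suc n}"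
  then show "(\<lambda>\<omega>. extend \<omega> i) \<in> borel_measurable (A \<Otimes>\<^sub>M P)"
    using measurable_Y measurable_compose[OF measurable_fst measurable_component_A, of i]
    by (cases "i = n") (auto simp: extend_def)
next
  show "extend \<in> space (A \<Otimes>\<^sub>M P) \<rightarrow> (\<Pi>\<^sub>E i\<in>{..<Suc n}. space borel)"
    by (auto simp: extend_def space_pair_measure space_A PiE_def extensional_def)
qed

lemma prob_space_joint_law: "prob_space joint_law"
  unfolding joint_law_def
  by (rule prob_space.prob_space_distr[OF prob_space_pair[OF prob_space_A prob_space_P] measurable_extend])

lemma sets_joint_law: "sets joint_law = sets (cube_space (Suc n))"
  by (simp add: joint_law_def)

lemma restrict_extend: "\<omega> \<in> space (A \<Otimes>\<^sub>M P) \<Longrightarrow> restrict (extend \<omega>) {..<n} = fst \<omega>"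
  by (auto simp: extend_def space_pair_measure space_A fun_eq_iff PiE_def extensional_def)

lemma measurable_restrict_cube: "(\<lambda>z. restrict z {..<n}) \<in> cube_space (Suc n) \<rightarrow>\<^sub>M cube_space n"
  unfolding cube_space_def by (rule measurable_restrict_subset) auto

lemma measurable_component_cube: "i < Suc n \<Longrightarrow> (\<lambda>z. z i) \<in> borel_measurable (cube_space (Suc n))"
  unfolding cube_space_def by (intro measurable_component_singleton) auto

lemma marg_first_joint_law: "marg_first (Suc n) joint_law = A"
proof -
  have "marg_first (Suc n) joint_law
      = distr (A \<Otimes>\<^sub>M P) (cube_space n) ((\<lambda>z. restrict z {..<n}) \<circ> extend)"
    unfolding marg_first_def joint_law_def
    by (simp add: distr_distr[OF measurable_restrict_cube measurable_extend])
  also have "\<dots> = distr (A \<Otimes>\<^sub>M P) A fst"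
    by (rule distr_cong) (auto simp: sets_A restrict_extend)
  also have "\<dots> = A"
    by (rule P.distr_pair_fst)
  finally show ?thesis .
qed

lemma distr_joint_law_component:
  assumes "i < n"
  shows "distr joint_law borel (\<lambda>z. z i) = distr A borel (\<lambda>x. x i)"
proof -
  have "distr joint_law borel (\<lambda>z. z i) = distr (A \<Otimes>\<^sub>M P) borel ((\<lambda>z. z i) \<circ> extend)"
    unfolding joint_law_def
    using assms by (intro distr_distr[OF measurable_component_cube measurable_extend]) simp
  also have "\<dots> = distr (A \<Otimes>\<^sub>M P) borel ((\<lambda>x. x i) \<circ> fst)"
    by (rule distr_cong) (use assms in \<open>auto simp: extend_def\<close>)
  also have "\<dots> = distr (distr (A \<Otimes>\<^sub>M P) A fst) borel (\<lambda>x. x i)"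
    by (rule distr_distr[symmetric, OF measurable_component_A[OF assms] measurable_fst])
  also have "\<dots> = distr A borel (\<lambda>x. x i)"
    by (simp add: P.distr_pair_fst)
  finally show ?thesis .
qed

lemma measure_pair_eq_set_integral_cond_law:
  assumes B: "B \<in> sets A" and F: "F \<in> sets borel"
  shows "measure (A \<Otimes>\<^sub>M P) {\<omega> \<in> space (A \<Otimes>\<^sub>M P). fst \<omega> \<in> B \<and> Y (fst \<omega>) (snd \<omega>) \<in> F}
    = (LINT x:B|A. measure (cond_law x) F)"
proof -
  define X where "X = {\<omega> \<in> space (A \<Otimes>\<^sub>M P). fst \<omega> \<in> B \<and> Y (fst \<omega>) (snd \<omega>) \<in> F}"
  have X: "X \<in> sets (A \<Otimes>\<^sub>M P)"
    unfolding X_def using B F measurable_Y by measurable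
  have slice: "emeasure P (Pair x -` X) = ennreal (indicator B x * measure (cond_law x) F)"
    if x: "x \<in> space A" for x
  proof -
    have "Pair x -` X = (if x \<in> B then Y x -` F \<inter> space P else {})"
      using x by (auto simp: X_def space_pair_measure)
    then show ?thesis
      unfolding cond_law_def using x
      by (simp add: measure_distr[OF measurable_Y_section[OF x] F] P.emeasure_eq_measure)
  qed
  have "integrable A (\<lambda>x. indicator B x * measure (cond_law x) F)"
  proof (rule A.integrable_const_bound[where B=1])
    show "AE x in A. norm (indicator B x * measure (cond_law x) F) \<le> 1"
      using prob_space_kernel[OF measurable_cond_law]
      by (intro AE_I2) (auto simp: prob_space.prob_le_1 split: split_indicator)
    show "(\<lambda>x. indicator B x * measure (cond_law x) F) \<in> borel_measurable A"
      using B F measurable_cond_law by measurable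
  qed
  then have "(\<integral>\<^sup>+x. ennreal (indicator B x * measure (cond_law x) F) \<partial>A)
      = ennreal (\<integral>x. indicator B x * measure (cond_law x) F \<partial>A)"
    by (intro nn_integral_eq_integral AE_I2) auto
  moreover have "emeasure (A \<Otimes>\<^sub>M P) X = (\<integral>\<^sup>+x. emeasure P (Pair x -` X) \<partial>A)"
    by (rule P.emeasure_pair_measure_alt[OF X])
  ultimately have "emeasure (A \<Otimes>\<^sub>M P) X = ennreal (\<integral>x. indicator B x * measure (cond_law x) F \<partial>A)"
    by (simp add: slice cong: nn_integral_cong)
  then show ?thesis
    by (simp add: X_def[symmetric] measure_def integral_nonneg_AE set_lebesgue_integral_def)
qed

lemma measure_joint_law:
  assumes B: "B \<in> sets A" and F: "F \<in> sets borel"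
  shows "measure joint_law {z \<in> space joint_law. restrict z {..<n} \<in> B \<and> z n \<in> F}
    = (LINT x:B|A. measure (cond_law x) F)"
proof -
  let ?S = "{z \<in> space joint_law. restrict z {..<n} \<in> B \<and> z n \<in> F}"
  have [measurable]: "B \<in> sets (cube_space n)" "F \<in> sets borel"
    "(\<lambda>z. restrict z {..<n}) \<in> cube_space (Suc n) \<rightarrow>\<^sub>M cube_space n"
    "(\<lambda>z. z n) \<in> borel_measurable (cube_space (Suc n))"
    using B F sets_A measurable_restrict_cube measurable_component_cube[of n] by simp_all
  have "?S \<in> sets joint_law"
    unfolding sets_joint_law sets_eq_imp_space_eq[OF sets_joint_law] by measurable
  moreover have "extend -` ?S \<inter> space (A \<Otimes>\<^sub>M P)
      = {\<omega> \<in> space (A \<Otimes>\<^sub>M P). fst \<omega> \<in> B \<and> Y (fst \<omega>) (snd \<omega>) \<in> F}"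
    using measurable_space[OF measurable_extend] restrict_extend
    by (auto simp: sets_eq_imp_space_eq[OF sets_joint_law] extend_def)
  ultimately show ?thesis
    using measure_pair_eq_set_integral_cond_law[OF B F] unfolding joint_law_def
    by (simp add: measure_distr[OF measurable_extend])
qed

lemma is_markov_kernel_cond_law: "is_markov_kernel_of (Suc n) A joint_law cond_law"
  unfolding is_markov_kernel_of_def
  using measurable_space[OF measurable_cond_law] measurable_cond_law measure_joint_law
  by (auto simp: space_prob_algebra)

end

lemma measure_lborel_affine_preimage:
  fixes b c :: real
  assumes c: "0 \<le> c" and F: "F \<in> sets borel"
  shows "c * measure lborel ({0..1} \<inter> {u. b + c * u \<in> F}) = measure lborel (F \<inter> {b..b + c})"
proof (cases "c = 0")
  case True
  have "measure lborel (F \<inter> {b..b + c}) \<le> measure lborel {b..b + c}"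
    using F fmeasurable_cbox[of b "b + c"] by (intro measure_mono_fmeasurable) auto
  then show ?thesis using True by (simp add: measure_nonneg antisym)
next
  case False
  then have c0: "0 < c" using c by simp
  let ?g = "\<lambda>u::real. b + c * u"
  have FI: "F \<inter> {b..b + c} \<in> sets borel" using F by auto
  have "emeasure lborel (F \<inter> {b..b + c})
      = emeasure (density (distr lborel borel ?g) (\<lambda>_. ennreal c)) (F \<inter> {b..b + c})"
    using lborel_real_affine[of c b] c0 by simp
  also have "\<dots> = ennreal c * emeasure lborel (?g -` (F \<inter> {b..b + c}))"
    using FI by (simp add: emeasure_density_const emeasure_distr)
  also have "?g -` (F \<inter> {b..b + c}) = {0..1} \<inter> {u. b + c * u \<in> F}"
    using c0 by (auto simp: zero_le_mult_iff)
  finally show ?thesis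
    using c0 by (simp add: measure_def enn2real_mult)
qed

lemma measure_lborel_split:
  fixes a :: real
  assumes "0 \<le> a" "a \<le> 1" and F: "F \<in> sets borel"
  shows "measure lborel (F \<inter> {0..a}) + measure lborel (F \<inter> {a..1}) = measure lborel (F \<inter> {0..1})"
proof -
  have fin: "F \<inter> {x..y} \<in> fmeasurable lborel" for x y :: real
    using fmeasurable_Int_fmeasurable[OF fmeasurable_cbox[of x y]] F by (simp add: Int_commute)
  have "measure lborel ((F \<inter> {0..a}) \<inter> (F \<inter> {a..1})) \<le> measure lborel {a..a}"
    using F fmeasurable_cbox[of a a] by (intro measure_mono_fmeasurable) auto
  then have "measure lborel ((F \<inter> {0..a}) \<inter> (F \<inter> {a..1})) = 0"
    by (simp add: measure_nonneg antisym)
  moreover have "F \<inter> {0..1} = (F \<inter> {0..a}) \<union> (F \<inter> {a..1})"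
    using assms by auto
  ultimately show ?thesis
    using measure_Un3[OF fin fin] by simp
qed

lemma integral_uniform01_indicator_affine:
  fixes b c :: real
  assumes "0 \<le> c" and F: "F \<in> sets borel"
  shows "c * (\<integral>u. indicator F (b + c * u) \<partial>uniform01) = measure lborel (F \<inter> {b..b + c})"
proof -
  interpret prob_space uniform01 by (rule prob_space_uniform01)
  have S: "{u. b + c * u \<in> F} \<in> sets borel"
    using F by measurable
  have "(\<integral>u. indicator F (b + c * u) \<partial>uniform01) = (\<integral>u. indicator {u. b + c * u \<in> F} u \<partial>uniform01)"
    by (rule Bochner_Integration.integral_cong) (auto split: split_indicator)
  also have "\<dots> = measure lborel ({0..1} \<inter> {u. b + c * u \<in> F})"
    using S by simp
  finally show ?thesis
    using measure_lborel_affine_preimage[OF assms] by simp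
qed

lemma integral_uniform01_two_point_mixture:
  fixes a :: real
  assumes a: "0 \<le> a" "a \<le> 1" and F: "F \<in> sets borel"
  shows "(\<integral>u. a * indicator F (a * u) + (1 - a) * indicator F (a + (1 - a) * u) \<partial>uniform01)
    = measure uniform01 F"
proof -
  interpret prob_space uniform01 by (rule prob_space_uniform01)
  have [measurable]: "F \<in> sets borel" by (rule F)
  have int: "integrable uniform01 (\<lambda>u. indicator F (b + c * u) :: real)" for b c :: real
    by (rule integrable_const_bound[where B=1]) (auto split: split_indicator)
  have "(\<integral>u. a * indicator F (a * u) + (1 - a) * indicator F (a + (1 - a) * u) \<partial>uniform01)
      = a * (\<integral>u. indicator F (0 + a * u) \<partial>uniform01)
        + (1 - a) * (\<integral>u. indicator F (a + (1 - a) * u) \<partial>uniform01)"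
    using int[of 0 a] int[of a "1 - a"] by simp
  also have "\<dots> = measure lborel (F \<inter> {0..0 + a}) + measure lborel (F \<inter> {a..a + (1 - a)})"
    using a by (simp only: integral_uniform01_indicator_affine[OF _ F] diff_ge_0_iff_ge)
  also have "\<dots> = measure lborel (F \<inter> {0..a}) + measure lborel (F \<inter> {a..1})"
    by simp
  also have "\<dots> = measure uniform01 F"
    using measure_lborel_split[OF a F] F by (simp add: Int_commute)
  finally show ?thesis .
qed

lemma Inf_two_point_quantile:
  fixes a s t \<tau> :: real
  assumes "0 \<le> a" "a \<le> 1" "0 \<le> s" "s \<le> t" "t \<le> 1" "0 < \<tau>" "\<tau> \<le> 1"
  shows "Inf {y \<in> {0..1}. \<tau> \<le> a * indicator {0..y} s + (1 - a) * indicator {0..y} t}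
    = (if \<tau> \<le> a then s else t)"
proof (rule cInf_eq_minimum)
  show "(if \<tau> \<le> a then s else t)
      \<in> {y \<in> {0..1}. \<tau> \<le> a * indicator {0..y} s + (1 - a) * indicator {0..y} t}"
    using assms by (auto simp: indicator_def)
next
  fix y assume "y \<in> {y \<in> {0..1}. \<tau> \<le> a * indicator {0..y} s + (1 - a) * indicator {0..y} t}"
  then have y: "\<tau> \<le> a * indicator {0..y} s + (1 - a) * indicator {0..y} t" by simp
  show "(if \<tau> \<le> a then s else t) \<le> y"
  proof (rule ccontr)
    assume "\<not> (if \<tau> \<le> a then s else t) \<le> y"
    then have "a * indicator {0..y} s + (1 - a) * indicator {0..y} t < \<tau>"
      using assms by (auto simp: indicator_def split: if_splits)
    with y show False by simp
  qed
qed

lemma bind_two_point_kernel_eq_uniform01: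
  assumes A: "prob_space A" and K: "K \<in> A \<rightarrow>\<^sub>M prob_algebra borel" and a: "0 \<le> a" "a \<le> 1"
    and U: "U \<in> borel_measurable A" "distr A borel U = uniform01"
    and K_eq: "\<And>x F. x \<in> space A \<Longrightarrow> F \<in> sets borel \<Longrightarrow>
      measure (K x) F = a * indicator F (a * U x) + (1 - a) * indicator F (a + (1 - a) * U x)"
  shows "bind A K = uniform01"
proof (rule measure_eqI)
  show "sets (bind A K) = sets uniform01"
    using sets_bind_kernel[OF A K] by simp
next
  fix F assume "F \<in> sets (bind A K)"
  then have F: "F \<in> sets borel"
    using sets_bind_kernel[OF A K] by simp
  have "measure (bind A K) F = (\<integral>x. measure (K x) F \<partial>A)"
    by (rule measure_bind_kernel[OF K A F])
  also have "\<dots> = (\<integral>x. a * indicator F (a * U x) + (1 - a) * indicator F (a + (1 - a) * U x) \<partial>A)"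
    by (rule Bochner_Integration.integral_cong) (simp_all add: K_eq F)
  also have "\<dots> = (\<integral>u. a * indicator F (a * u) + (1 - a) * indicator F (a + (1 - a) * u) \<partial>distr A borel U)"
    using F U(1) by (subst integral_distr) simp_all
  also have "\<dots> = measure uniform01 F"
    using U(2) integral_uniform01_two_point_mixture[OF a F] by simp
  finally show "emeasure (bind A K) F = emeasure uniform01 F"
    using prob_space_bind_kernel[OF A K] prob_space_uniform01
    by (simp add: finite_measure.emeasure_eq_measure[OF prob_space.finite_measure])
qed

lemma integral_quantile_reg_two_point_kernel:
  assumes A: "prob_space A" and K: "K \<in> A \<rightarrow>\<^sub>M prob_algebra borel" and a: "0 \<le> a" "a \<le> 1"
    and U: "U \<in> borel_measurable A" "distr A borel U = uniform01"
    and K_eq: "\<And>x F. x \<in> space A \<Longrightarrow> F \<in> sets borel \<Longrightarrow>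
      measure (K x) F = a * indicator F (a * U x) + (1 - a) * indicator F (a + (1 - a) * U x)"
    and \<tau>: "0 < \<tau>" "\<tau> \<le> 1"
  shows "(\<integral>x. quantile_reg K \<tau> x \<partial>A) = (if \<tau> \<le> a then a / 2 else (1 + a) / 2)"
proof -
  define g where "g = (\<lambda>u::real. if \<tau> \<le> a then a * u else a + (1 - a) * u)"
  have "AE x in A. U x \<in> {0..1}"
  proof (rule AE_distrD[OF U(1)])
    show "AE u in distr A borel U. u \<in> {0..1}"
      unfolding U(2) by (rule AE_uniform_measureI) auto
  qed
  then have "AE x in A. quantile_reg K \<tau> x = g (U x)"
    using AE_space
  proof eventually_elim
    case (elim x)
    then have "0 \<le> a * U x" "a * U x \<le> a" "0 \<le> (1 - a) * U x" "(1 - a) * U x \<le> 1 - a"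
      using a by (simp_all add: mult_left_le)
    then have "0 \<le> a * U x" "a * U x \<le> a + (1 - a) * U x" "a + (1 - a) * U x \<le> 1"
      by linarith+
    then show ?case
      using Inf_two_point_quantile[OF a _ _ _ \<tau>] elim
      by (simp add: quantile_reg_def K_eq g_def)
  qed
  then have "(\<integral>x. quantile_reg K \<tau> x \<partial>A) = (\<integral>x. g (U x) \<partial>A)"
    using U(1) by (intro integral_cong_AE measurable_quantile_reg[OF K]) (simp_all add: g_def)
  also have "\<dots> = (\<integral>u. g u \<partial>distr A borel U)"
    by (rule integral_distr[symmetric, OF U(1)]) (unfold g_def, measurable)
  also have "\<dots> = (if \<tau> \<le> a then a / 2 else (1 + a) / 2)"
    using integral_uniform01_affine[of 0 a] integral_uniform01_affine[of a "1 - a"]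
    by (simp add: U(2) g_def field_simps)
  finally show ?thesis .
qed

lemma randomized_extension_two_point:
  assumes "0 < n" and A: "prob_space A" "sets A = sets (cube_space n)"
  shows "randomized_extension n A (measure_pmf (bernoulli_pmf a))
    (\<lambda>x b. if b then a * x 0 else a + (1 - a) * x 0)"
proof (rule randomized_extension.intro)
  have [measurable]: "(\<lambda>x. x 0) \<in> borel_measurable A"
    unfolding measurable_cong_sets[OF A(2) refl] cube_space_def
    using \<open>0 < n\<close> by (intro measurable_component_singleton) auto
  have "sets (A \<Otimes>\<^sub>M measure_pmf (bernoulli_pmf a)) = sets (A \<Otimes>\<^sub>M count_space UNIV)"
    by (rule sets_pair_measure_cong[OF refl sets_measure_pmf_count_space])
  then show "(\<lambda>\<omega>. if snd \<omega> then a * fst \<omega> 0 else a + (1 - a) * fst \<omega> 0)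
      \<in> A \<Otimes>\<^sub>M measure_pmf (bernoulli_pmf a) \<rightarrow>\<^sub>M borel"
    unfolding measurable_cong_sets[OF _ refl] by measurable
qed (simp_all add: A prob_space_measure_pmf)

lemma exists_copula_with_quantile_integral:
  assumes "2 \<le> d" and copula_A: "is_copula (d - 1) A" and a: "0 \<le> a" "a \<le> 1"
    and \<tau>: "0 < \<tau>" "\<tau> \<le> 1"
  shows "\<exists>C K. C \<in> copulas_with_marginal d A \<and> is_markov_kernel_of d A C K \<and>
    (\<integral>x. quantile_reg K \<tau> x \<partial>A) = (if \<tau> \<le> a then a / 2 else (1 + a) / 2)"
proof -
  define n where "n = d - 1"
  have d: "d = Suc n" "0 < n"
    using assms(1) by (auto simp: n_def)
  have A: "prob_space A" "sets A = sets (cube_space n)"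
    and uniform: "\<And>i. i < n \<Longrightarrow> distr A borel (\<lambda>x. x i) = uniform01"
    using copula_A by (auto simp: is_copula_def n_def)
  interpret E: randomized_extension n A "measure_pmf (bernoulli_pmf a)"
    "\<lambda>x b. if b then a * x 0 else a + (1 - a) * x 0"
    by (rule randomized_extension_two_point[OF d(2) A])
  have K_eq: "measure (E.cond_law x) F = a * indicator F (a * x 0) + (1 - a) * indicator F (a + (1 - a) * x 0)"
    if "x \<in> space A" "F \<in> sets borel" for x F
    using E.measure_cond_law[OF that] a by simp
  have U: "(\<lambda>x. x 0) \<in> borel_measurable A" "distr A borel (\<lambda>x. x 0) = uniform01"
    using E.measurable_component_A uniform d by simp_all
  have "distr E.joint_law borel (\<lambda>z. z n) = bind A E.cond_law"
    using last_marginal_eq_bind[OF E.is_markov_kernel_cond_law] A E.prob_space_joint_law E.sets_joint_law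
    by simp
  also have "\<dots> = uniform01"
    by (rule bind_two_point_kernel_eq_uniform01[OF A(1) E.measurable_cond_law a U K_eq])
  finally have "distr E.joint_law borel (\<lambda>z. z i) = uniform01" if "i < d" for i
    using that E.distr_joint_law_component uniform by (cases "i = n") (simp_all add: d)
  then have "E.joint_law \<in> copulas_with_marginal d A"
    using E.prob_space_joint_law E.sets_joint_law E.marg_first_joint_law
    by (simp add: copulas_with_marginal_def is_copula_def d)
  moreover have "is_markov_kernel_of d A E.joint_law E.cond_law"
    using E.is_markov_kernel_cond_law by (simp add: d)
  moreover have "(\<integral>x. quantile_reg E.cond_law \<tau> x \<partial>A) = (if \<tau> \<le> a then a / 2 else (1 + a) / 2)"
    by (rule integral_quantile_reg_two_point_kernel[OF A(1) E.measurable_cond_law a U K_eq \<tau>])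
  ultimately show ?thesis by blast
qed

lemma cSup_eq_of_dense_below:
  fixes S :: "'a::{conditionally_complete_linorder, dense_linorder} set"
  assumes upper: "\<And>v. v \<in> S \<Longrightarrow> v \<le> b" and dense_below: "\<And>w. c < w \<Longrightarrow> w < b \<Longrightarrow> w \<in> S"
    and "c < b"
  shows "Sup S = b"
proof (rule cSup_eq_non_empty)
  obtain w where "c < w" "w < b"
    using dense[OF \<open>c < b\<close>] by blast
  then show "S \<noteq> {}"
    using dense_below by blast
next
  show "v \<le> b" if "v \<in> S" for v
    using that by (rule upper)
next
  fix y assume y: "\<And>v. v \<in> S \<Longrightarrow> v \<le> y"
  show "b \<le> y"
    by (rule dense_le_bounded[OF \<open>c < b\<close>]) (simp add: y dense_below)
qed

theorem theorem19:
  fixes d :: nat and A :: "(nat \<Rightarrow> real) measure" and \<tau> :: real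
  assumes "d \<ge> 2" and "is_copula (d - 1) A" and "0 < \<tau>" and "\<tau> \<le> 1"
  shows "(\<forall>C K. C \<in> copulas_with_marginal d A \<and> is_markov_kernel_of d A C K \<longrightarrow>
            \<tau> / 2 \<le> (\<integral>x. quantile_reg K \<tau> x \<partial>A) \<and> (\<integral>x. quantile_reg K \<tau> x \<partial>A) \<le> (\<tau> + 1) / 2)
       \<and> Inf {(\<integral>x. quantile_reg K \<tau> x \<partial>A) | C K.
               C \<in> copulas_with_marginal d A \<and> is_markov_kernel_of d A C K} = \<tau> / 2
       \<and> Sup {(\<integral>x. quantile_reg K \<tau> x \<partial>A) | C K.
               C \<in> copulas_with_marginal d A \<and> is_markov_kernel_of d A C K} = (\<tau> + 1) / 2"
proof -
  let ?S = "{(\<integral>x. quantile_reg K \<tau> x \<partial>A) | C K.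
    C \<in> copulas_with_marginal d A \<and> is_markov_kernel_of d A C K}"
  have bounds: "\<tau> / 2 \<le> (\<integral>x. quantile_reg K \<tau> x \<partial>A) \<and> (\<integral>x. quantile_reg K \<tau> x \<partial>A) \<le> (\<tau> + 1) / 2"
    if "C \<in> copulas_with_marginal d A \<and> is_markov_kernel_of d A C K" for C K
  proof -
    interpret copula_kernel d A C K
      using assms that by unfold_locales auto
    show ?thesis
      using integral_quantile_reg_ge integral_quantile_reg_le assms(3,4) by simp
  qed
  have attained: "(if \<tau> \<le> a then a / 2 else (1 + a) / 2) \<in> ?S" if a: "0 \<le> a" "a \<le> 1" for a
  proof -
    obtain C K where "C \<in> copulas_with_marginal d A" "is_markov_kernel_of d A C K"
      "(\<integral>x. quantile_reg K \<tau> x \<partial>A) = (if \<tau> \<le> a then a / 2 else (1 + a) / 2)"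
      using exists_copula_with_quantile_integral[OF assms(1,2) a assms(3,4)] by blast
    then show ?thesis by force
  qed
  have "\<tau> / 2 \<in> ?S"
    using attained[of \<tau>] assms by simp
  then have "Inf ?S = \<tau> / 2"
    using bounds by (intro cInf_eq_minimum) auto
  moreover have "Sup ?S = (\<tau> + 1) / 2"
  proof (rule cSup_eq_of_dense_below)
    show "v \<le> (\<tau> + 1) / 2" if "v \<in> ?S" for v
      using that bounds by blast
    show "w \<in> ?S" if "1 / 2 < w" "w < (\<tau> + 1) / 2" for w
      using that attained[of "2 * w - 1"] assms(4) by simp
    show "1 / 2 < (\<tau> + 1) / 2"
      using assms(3) by simp
  qed
  ultimately show ?thesis using bounds by blast
qed

end
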